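(* Let $\phi:V\to V$ be a continuous coherency preserver. Assume that $\phi$ is constant on some coherent line, i.e. on some line $a+\mathbb{R}x$ with $a\in V$ and $x\in V\setminus\{0\}$, $q(x)=0$. Then $\phi$ is degenerate.
   Context: Fix an integer $n\ge4$, let $V=\mathbb{R}^n$ with its standard topology and $q(x_1,\dots,x_n)=x_n^2-\sum_{k=1}^{n-1}x_k^2$. Points $x,y$ are coherent when $q(x-y)=0$. For $a\in V$, $\mathcal{C}(a)=\{m\in V: q(m-a)=0\}$. A coherency preserver is a map $\phi:V\to V$ such that $q(b-a)=0$ implies $q(\phi(b)-\phi(a))=0$; it is degenerate when its range is included in $\mathcal{C}(c)$ for some $c\in V$. *)

theory Defs
  imports "HOL-Analysis.Analysis"
begin

text \<open>V = R^n realised as real^'n, where the index type 'n is finite and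
  well-ordered; the coordinates are x_1,...,x_n in the order of 'n, so x_n is the
  coordinate at the greatest index.\<close>

definition last_idx :: "'n::{finite,wellorder}" where
  "last_idx = (GREATEST i. True)"

definition q :: "real ^ 'n::{finite,wellorder} \<Rightarrow> real" where
  "q x = (x $ last_idx)^2 - (\<Sum>k\<in>UNIV - {last_idx}. (x $ k)^2)"

definition coherent :: "real ^ 'n::{finite,wellorder} \<Rightarrow> real ^ 'n::{finite,wellorder} \<Rightarrow> bool" where
  "coherent x y \<longleftrightarrow> q (x - y) = 0"

definition lightcone :: "real ^ 'n::{finite,wellorder} \<Rightarrow> (real ^ 'n::{finite,wellorder}) set" where
  "lightcone a = {m. q (m - a) = 0}"

definition coherency_preserver :: "(real ^ 'n::{finite,wellorder} \<Rightarrow> real ^ 'n::{finite,wellorder}) \<Rightarrow> bool" where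
  "coherency_preserver \<phi> \<longleftrightarrow> (\<forall>a b. q (b - a) = 0 \<longrightarrow> q (\<phi> b - \<phi> a) = 0)"

definition degenerate :: "(real ^ 'n::{finite,wellorder} \<Rightarrow> real ^ 'n::{finite,wellorder}) \<Rightarrow> bool" where
  "degenerate \<phi> \<longleftrightarrow> (\<exists>c. range \<phi> \<subseteq> lightcone c)"

end

theory Submission
  imports Defs
begin

text \<open>For a null vector x, the line a + \<real>x meets the light cone of every point m
  with B(m - a, x) \<noteq> 0, where B is the Lorentz bilinear form polarising q: along
  the line, q(m - a - t x) is affine in t with slope -2 B(m - a, x). Hence \<phi>(m)
  is coherent with the constant value \<phi>(a) for all m off an affine hyperplane,
  and by continuity for all m, so the range of \<phi> lies in the light cone of \<phi>(a).\<close>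

definition lorentz_inner :: "real ^ 'n::{finite,wellorder} \<Rightarrow> real ^ 'n::{finite,wellorder} \<Rightarrow> real" where
  "lorentz_inner w x = w$last_idx * x$last_idx - (\<Sum>k\<in>UNIV - {last_idx}. w$k * x$k)"

lemma q_diff_scaleR:
  "q (w - t *\<^sub>R x) = q w - 2 * t * lorentz_inner w x + t\<^sup>2 * q x"
  unfolding q_def lorentz_inner_def
  by (simp add: power2_eq_square algebra_simps sum.distrib sum_subtractf sum_distrib_left)

lemma linear_lorentz_inner_left: "linear (\<lambda>w. lorentz_inner w x)"
  by (rule linearI)
     (simp_all add: lorentz_inner_def algebra_simps sum.distrib sum_subtractf sum_distrib_left)

lemma continuous_on_q: "continuous_on UNIV q"
  unfolding q_def[abs_def] by (intro continuous_intros)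

lemma lorentz_inner_nondegenerate:
  fixes x :: "real ^ 'n::{finite,wellorder}"
  assumes "x \<noteq> 0"
  obtains y where "lorentz_inner y x \<noteq> 0"
proof
  define y where "y = (\<chi> i. if i = last_idx then x$last_idx else - x$i)"
  obtain i where "x$i \<noteq> 0"
    using assms by (metis vec_eq_iff zero_index)
  then have "0 < (\<Sum>k\<in>UNIV. (x$k)\<^sup>2)"
    by (intro sum_pos2[of UNIV i]) auto
  also have "(\<Sum>k\<in>UNIV. (x$k)\<^sup>2) = (x$last_idx)\<^sup>2 + (\<Sum>k\<in>UNIV - {last_idx}. (x$k)\<^sup>2)"
    by (simp add: sum.remove)
  also have "\<dots> = lorentz_inner y x"
    unfolding lorentz_inner_def y_def by (simp add: power2_eq_square sum_negf)
  finally show "lorentz_inner y x \<noteq> 0" by simp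
qed

lemma null_line_meets_lightcone:
  assumes "q x = 0" and "lorentz_inner (m - a) x \<noteq> 0"
  obtains t where "coherent m (a + t *\<^sub>R x)"
proof
  define t where "t = q (m - a) / (2 * lorentz_inner (m - a) x)"
  have "q ((m - a) - t *\<^sub>R x) = 0"
    unfolding q_diff_scaleR using assms by (simp add: t_def)
  then show "coherent m (a + t *\<^sub>R x)"
    unfolding coherent_def by (simp add: diff_diff_eq)
qed

lemma continuous_vanishing_off_hyperplane:
  fixes g :: "'a::real_normed_vector \<Rightarrow> 'b::real_normed_vector"
  assumes "continuous_on UNIV g" and "linear l" and "l y \<noteq> 0"
    and vanish: "\<And>m. l m \<noteq> c \<Longrightarrow> g m = 0"
  shows "g m = 0"
proof (cases "l m = c")
  case True
  define h where "h s = g (m + s *\<^sub>R y)" for s :: real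
  have "continuous_on UNIV h"
    unfolding h_def
    by (rule continuous_on_compose2[OF assms(1)]) (auto intro!: continuous_intros)
  then have "(h \<longlongrightarrow> h 0) (at 0)"
    by (simp add: continuous_on_def)
  moreover have "h s = 0" if "s \<noteq> 0" for s
    unfolding h_def using that True assms(2,3)
    by (intro vanish) (simp add: linear_add linear_scale)
  then have "(h \<longlongrightarrow> 0) (at 0)"
    by (intro tendsto_eventually) (simp add: eventually_at_filter)
  ultimately have "h 0 = 0"
    by (rule tendsto_unique[OF trivial_limit_at])
  then show ?thesis by (simp add: h_def)
qed (use vanish in blast)

theorem proposition4p1:
  fixes \<phi> :: "real ^ 'n::{finite,wellorder} \<Rightarrow> real ^ 'n::{finite,wellorder}"
    and a x :: "real ^ 'n::{finite,wellorder}"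
  assumes "CARD('n) \<ge> 4"
    and "continuous_on UNIV \<phi>"
    and "coherency_preserver \<phi>"
    and "x \<noteq> 0" and "q x = 0"
    and "\<forall>t::real. \<phi> (a + t *\<^sub>R x) = \<phi> a"
  shows "degenerate \<phi>"
proof -
  have off_hyperplane: "q (\<phi> m - \<phi> a) = 0" if "lorentz_inner m x \<noteq> lorentz_inner a x" for m
  proof -
    have "lorentz_inner (m - a) x \<noteq> 0"
      using that by (simp add: linear_diff[OF linear_lorentz_inner_left])
    then obtain t where "coherent m (a + t *\<^sub>R x)"
      using null_line_meets_lightcone assms(5) by blast
    then show ?thesis
      using assms(3,6) unfolding coherency_preserver_def coherent_def by metis
  qed
  obtain y where "lorentz_inner y x \<noteq> 0"
    using lorentz_inner_nondegenerate assms(4) by blast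
  have "continuous_on UNIV (\<lambda>m. q (\<phi> m - \<phi> a))"
    by (rule continuous_on_compose2[OF continuous_on_q]) (auto intro!: continuous_intros assms(2))
  then have "q (\<phi> m - \<phi> a) = 0" for m
    using continuous_vanishing_off_hyperplane linear_lorentz_inner_left
      \<open>lorentz_inner y x \<noteq> 0\<close> off_hyperplane by blast
  then show ?thesis
    unfolding degenerate_def lightcone_def by blast
qed

end
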